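(* For every $n\ge1$, $$u_{2n}(a)\,a^{2n}=\sum_{k=0}^\infty(-1)^k\frac{A_k[n]}{a^{2k}},$$ where the series converges absolutely for $|a|>n$.
   Context: The rational functions $u_{2n}(a)$: $(a^2+1)u_2=1$ and for $n\ge2$: $(a^2+n^2)u_{2n}=3u_{2(n-1)}+3\sum_{j_1+j_2=n-1}u_{2j_1}u_{2j_2}+\sum_{j_1+j_2+j_3=n-1}u_{2j_1}u_{2j_2}u_{2j_3}-\sum_{1\le j_1,\,2j_1<n}(n-2j_1)^2u_{2j_1}u_{2(n-j_1)}$, all indices $j_i\ge1$. $A_0(z)$ is the unique function holomorphic near $0$ with $A_0(0)=0$ and $z(1+A_0)^3=A_0$; $(A_k)_{k\ge0}$ is the unique sequence of functions holomorphic in $|z|<4/27$ such that $\sum_kA_k(z)a^{-2k}$ formally solves $a^2(z(1+A)^3-A)=(1+A)\delta_z^2A-(\delta_zA)^2$, $\delta_z=z\,d/dz$. The numbers $A_k[n]$ are defined by $A_k(z)=(-1)^k\sum_{n\ge1}A_k[n]z^n$. *)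

theory Defs
  imports "HOL-Analysis.Analysis"
begin

text \<open>The rational functions u_{2n}(a), indexed here by n (so u n a = u_{2n}(a)).
  The value at n = 0 is never used (all indices in the recursion are at least 1).\<close>
function u :: "nat \<Rightarrow> complex \<Rightarrow> complex" where
  "u 0 a = 0"
| "u (Suc 0) a = 1 / (a^2 + 1)"
| "u (Suc (Suc m)) a =
     (let n = Suc (Suc m) in
      (3 * u (n - 1) a
       + 3 * (\<Sum>(j1, j2) \<in> {(j1, j2). 1 \<le> j1 \<and> 1 \<le> j2 \<and> j1 + j2 = n - 1}. u j1 a * u j2 a)
       + (\<Sum>(j1, j2, j3) \<in> {(j1, j2, j3). 1 \<le> j1 \<and> 1 \<le> j2 \<and> 1 \<le> j3 \<and> j1 + j2 + j3 = n - 1}.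
            u j1 a * u j2 a * u j3 a)
       - (\<Sum>j1 \<in> {j1. 1 \<le> j1 \<and> 2 * j1 < n}. (of_nat (n - 2 * j1))^2 * u j1 a * u (n - j1) a))
      / (a^2 + (of_nat n)^2))"
  by pat_completeness auto
termination
  by (relation "Wellfounded.measure fst") (auto simp: Let_def)

definition delta :: "(complex \<Rightarrow> complex) \<Rightarrow> complex \<Rightarrow> complex" where
  "delta f z = z * deriv f z"

text \<open>B k = coefficient of a^{-2k} in 1 + A, i.e. 1 + A_0 for k = 0 and A_k otherwise.\<close>
definition Bcoef :: "(nat \<Rightarrow> complex \<Rightarrow> complex) \<Rightarrow> nat \<Rightarrow> complex \<Rightarrow> complex" where
  "Bcoef A k z = (if k = 0 then 1 + A 0 z else A k z)"

text \<open>The sequence A satisfies, coefficientwise in a^{-2}, the equation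
  a^2 (z(1+A)^3 - A) = (1+A) delta^2 A - (delta A)^2 with A = sum_k A_k a^{-2k}:
  the coefficient of a^{2} gives z(1+A_0)^3 = A_0, and the coefficient of a^{-2(k-1)}, k \<ge> 1, gives
  z [(1+A)^3]_k - A_k = [(1+A) delta^2 A]_{k-1} - [(delta A)^2]_{k-1}.\<close>
definition formal_solution :: "(nat \<Rightarrow> complex \<Rightarrow> complex) \<Rightarrow> complex \<Rightarrow> bool" where
  "formal_solution A z \<longleftrightarrow>
     z * (1 + A 0 z)^3 = A 0 z \<and>
     (\<forall>k\<ge>1.
        z * (\<Sum>i\<le>k. \<Sum>j\<le>k - i. Bcoef A i z * Bcoef A j z * Bcoef A (k - i - j) z) - A k z
        = (\<Sum>i\<le>k - 1. Bcoef A i z * delta (delta (A (k - 1 - i))) z)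
          - (\<Sum>i\<le>k - 1. delta (A i) z * delta (A (k - 1 - i)) z))"

text \<open>A_k[n], defined by A_k(z) = (-1)^k sum_{n\<ge>1} A_k[n] z^n.\<close>
definition Acoef :: "(nat \<Rightarrow> complex \<Rightarrow> complex) \<Rightarrow> nat \<Rightarrow> nat \<Rightarrow> complex" where
  "Acoef A k n = (-1)^k * ((deriv ^^ n) (A k) 0 / fact n)"

end

theory Submission
  imports Defs "HOL-Complex_Analysis.Laurent_Convergence"
begin

(* Put w = a^-2 and let P be the bivariate series with [z^n w^k] P = [z^n] A_k, so that
   P_n(w) := [z^n] P = sum_k (-1)^k A_k[n] w^k. Comparing coefficients of z^n in the
   differential equation gives P_0 = 0 and
     P_n(w) (1 + n^2 w) = [z^(n-1)] (1 + P)^3 - w S_n(P_1, ..., P_(n-1))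
   with an explicit quadratic form S_n. Inverting 1 + n^2 w by a geometric series shows by
   induction that P_n converges for |w| < 1/n^2, and evaluation at such w commutes with the
   right-hand side. The defining recursion of u says exactly that v_n = a^(2n) u_2n(a) satisfies
   the same recursion at w = a^-2. As 1 + j^2 w is nonzero for j <= n < |a|, the recursion
   determines its solution up to index n, so P_n(a^-2) = v_n. *)

unbundle no vec_syntax

section \<open>The Euler operator and transposed bivariate series\<close>

definition fps_euler :: "'a::comm_semiring_1 fps \<Rightarrow> 'a fps" where
  "fps_euler F = Abs_fps (\<lambda>n. of_nat n * F $ n)"

lemma fps_euler_nth [simp]: "fps_euler F $ n = of_nat n * F $ n"
  by (simp add: fps_euler_def)

lemma has_fps_expansion_delta:
  assumes "f has_fps_expansion F"
  shows "delta f has_fps_expansion fps_euler F"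
proof -
  have "(\<lambda>z. z * deriv f z) has_fps_expansion fps_X * fps_deriv F"
    by (intro has_fps_expansion_mult has_fps_expansion_fps_X has_fps_expansion_deriv assms)
  moreover have "fps_X * fps_deriv F = fps_euler F"
    by (rule fps_ext) auto
  ultimately show ?thesis
    by (simp add: delta_def[abs_def])
qed

definition fps_transpose :: "'a::zero fps fps \<Rightarrow> 'a fps fps" where
  "fps_transpose G = Abs_fps (\<lambda>n. Abs_fps (\<lambda>k. G $ k $ n))"

lemma fps_transpose_nth [simp]: "fps_transpose G $ n $ k = G $ k $ n"
  by (simp add: fps_transpose_def)

lemma fps_transpose_add: "fps_transpose (G + H) = fps_transpose G + fps_transpose H"
  by (intro fps_ext) simp

lemma fps_transpose_diff:
  "fps_transpose (G - H :: 'a::group_add fps fps) = fps_transpose G - fps_transpose H"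
  by (intro fps_ext) simp

lemma fps_transpose_one: "fps_transpose (1 :: 'a::zero_neq_one fps fps) = 1"
  by (intro fps_ext) (simp add: fps_one_nth)

lemma fps_transpose_X: "fps_transpose (fps_X :: 'a::zero_neq_one fps fps) = fps_const fps_X"
  by (intro fps_ext) (simp add: fps_X_def)

lemma fps_transpose_const_X: "fps_transpose (fps_const fps_X :: 'a::zero_neq_one fps fps) = fps_X"
  by (intro fps_ext) (simp add: fps_X_def)

lemma fps_transpose_mult:
  fixes G H :: "'a::comm_ring_1 fps fps"
  shows "fps_transpose (G * H) = fps_transpose G * fps_transpose H"
proof (intro fps_ext)
  fix n k
  have "fps_transpose (G * H) $ n $ k = (\<Sum>i=0..k. \<Sum>j=0..n. G $ i $ j * H $ (k - i) $ (n - j))"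
    by (simp add: fps_mult_nth fps_sum_nth)
  also have "\<dots> = (\<Sum>j=0..n. \<Sum>i=0..k. G $ i $ j * H $ (k - i) $ (n - j))"
    by (rule sum.swap)
  also have "\<dots> = (fps_transpose G * fps_transpose H) $ n $ k"
    by (simp add: fps_mult_nth fps_sum_nth)
  finally show "fps_transpose (G * H) $ n $ k = (fps_transpose G * fps_transpose H) $ n $ k" .
qed

lemma fps_transpose_power:
  fixes G :: "'a::comm_ring_1 fps fps"
  shows "fps_transpose (G ^ p) = fps_transpose G ^ p"
  by (induction p) (simp_all add: fps_transpose_one fps_transpose_mult)

definition fps_euler_coeffs :: "'a::comm_semiring_1 fps fps \<Rightarrow> 'a fps fps" where
  "fps_euler_coeffs G = Abs_fps (\<lambda>k. fps_euler (G $ k))"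

lemma fps_euler_coeffs_nth [simp]: "fps_euler_coeffs G $ k = fps_euler (G $ k)"
  by (simp add: fps_euler_coeffs_def)

lemma fps_transpose_euler_coeffs: "fps_transpose (fps_euler_coeffs G) = fps_euler (fps_transpose G)"
  by (intro fps_ext) (simp flip: fps_of_nat)

lemma fps_cube_nth:
  fixes F :: "'a::comm_ring_1 fps"
  shows "(F ^ 3) $ k = (\<Sum>i\<le>k. \<Sum>j\<le>k - i. F $ i * F $ j * F $ (k - i - j))"
  by (simp add: power3_eq_cube mult.assoc fps_mult_nth atLeast0AtMost sum_distrib_left
      diff_diff_add)

lemma Bcoef_has_fps_expansion:
  assumes "\<And>j. A j has_fps_expansion G $ j"
  shows "Bcoef A j has_fps_expansion (1 + G) $ j"
proof (cases "j = 0")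
  case True
  have "(\<lambda>z. 1 + A 0 z) has_fps_expansion 1 + G $ 0"
    by (intro has_fps_expansion_add has_fps_expansion_1 assms)
  then show ?thesis
    using True by (simp add: Bcoef_def[abs_def])
qed (simp add: Bcoef_def[abs_def] assms)

lemma formal_solution_fps_equation:
  fixes A :: "nat \<Rightarrow> complex \<Rightarrow> complex"
  assumes holo: "\<And>k. A k holomorphic_on ball 0 (4/27)"
    and formal: "\<And>z. z \<in> ball 0 (4/27) \<Longrightarrow> formal_solution A z"
  defines "G \<equiv> Abs_fps (\<lambda>k. fps_expansion (A k) 0)"
  shows "fps_const fps_X * (1 + G) ^ 3 - G
       = fps_X * ((1 + G) * fps_euler_coeffs (fps_euler_coeffs G) - fps_euler_coeffs G ^ 2)"
proof (rule fps_ext)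
  fix k
  have has_A: "A j has_fps_expansion G $ j" for j
    unfolding G_def using has_fps_expansion_fps_expansion[OF _ _ holo] by simp
  note has_B = Bcoef_has_fps_expansion[OF has_A]
  define L where "L z = z * (\<Sum>i\<le>k. \<Sum>j\<le>k - i. Bcoef A i z * Bcoef A j z * Bcoef A (k - i - j) z)
    - A k z" for z
  define R where "R z = (if k = 0 then 0 else
      (\<Sum>i\<le>k - 1. Bcoef A i z * delta (delta (A (k - 1 - i))) z)
      - (\<Sum>i\<le>k - 1. delta (A i) z * delta (A (k - 1 - i)) z))" for z
  have "L has_fps_expansion fps_X * ((1 + G) ^ 3) $ k - G $ k"
    unfolding L_def fps_cube_nth
    by (intro has_fps_expansion_diff has_fps_expansion_mult has_fps_expansion_fps_X
        has_fps_expansion_sum has_A has_B)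
  then have has_L: "L has_fps_expansion (fps_const fps_X * (1 + G) ^ 3 - G) $ k"
    by simp
  have "(fps_X * ((1 + G) * fps_euler_coeffs (fps_euler_coeffs G) - fps_euler_coeffs G ^ 2)) $ k
      = (if k = 0 then 0 else
          (\<Sum>i\<le>k - 1. (1 + G) $ i * fps_euler (fps_euler (G $ (k - 1 - i))))
          - (\<Sum>i\<le>k - 1. fps_euler (G $ i) * fps_euler (G $ (k - 1 - i))))"
    by (simp only: fps_X_mult_nth)
      (simp del: fps_add_nth add: power2_eq_square fps_mult_nth atLeast0AtMost)
  also have "R has_fps_expansion \<dots>"
    unfolding R_def
    by (cases "k = 0")
      (simp_all del: fps_add_nth add: has_fps_expansion_diff has_fps_expansion_mult
        has_fps_expansion_sum has_A has_B has_fps_expansion_delta)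
  finally have has_R: "R has_fps_expansion
      (fps_X * ((1 + G) * fps_euler_coeffs (fps_euler_coeffs G) - fps_euler_coeffs G ^ 2)) $ k" .
  have "eventually (\<lambda>z. z \<in> ball 0 (4/27)) (nhds (0::complex))"
    by (intro eventually_nhds_in_open) auto
  then have "eventually (\<lambda>z. L z = R z) (nhds 0)"
    by eventually_elim
      (use formal in \<open>auto simp: formal_solution_def L_def R_def Bcoef_def power3_eq_cube\<close>)
  with has_L have "R has_fps_expansion (fps_const fps_X * (1 + G) ^ 3 - G) $ k"
    using has_fps_expansion_cong by blast
  with has_R show "(fps_const fps_X * (1 + G) ^ 3 - G) $ k
      = (fps_X * ((1 + G) * fps_euler_coeffs (fps_euler_coeffs G) - fps_euler_coeffs G ^ 2)) $ k"
    using fps_expansion_unique_complex by blast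
qed

lemma expansion_coeffs_euler_equation:
  fixes A :: "nat \<Rightarrow> complex \<Rightarrow> complex"
  assumes holo: "\<And>k. A k holomorphic_on ball 0 (4/27)"
    and formal: "\<And>z. z \<in> ball 0 (4/27) \<Longrightarrow> formal_solution A z"
  defines "P \<equiv> fps_transpose (Abs_fps (\<lambda>k. fps_expansion (A k) 0))"
  shows "fps_X * (1 + P) ^ 3 - P
       = fps_const fps_X * ((1 + P) * fps_euler (fps_euler P) - fps_euler P ^ 2)"
  \<comment> \<open>Outer variable z, inner variable w = a^-2; so fps_const fps_X stands for w.\<close>
proof -
  define G where "G = Abs_fps (\<lambda>k. fps_expansion (A k) 0)"
  have "fps_transpose (fps_const fps_X * (1 + G) ^ 3 - G)
      = fps_transpose (fps_X * ((1 + G) * fps_euler_coeffs (fps_euler_coeffs G) - fps_euler_coeffs G ^ 2))"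
    unfolding G_def using holo formal by (subst formal_solution_fps_equation) auto
  then show ?thesis
    unfolding P_def G_def[symmetric]
    by (simp only: fps_transpose_diff fps_transpose_mult fps_transpose_power fps_transpose_add
        fps_transpose_one fps_transpose_X fps_transpose_const_X fps_transpose_euler_coeffs)
qed

section \<open>The coefficient recursion\<close>

definition euler_quadratic :: "nat \<Rightarrow> 'a::comm_ring_1 fps \<Rightarrow> 'a" where
  "euler_quadratic n F = (\<Sum>i=1..n-1. (of_nat ((n-i)^2) - of_nat (i*(n-i))) * (F $ i * F $ (n-i)))"

lemma euler_quadratic_nth:
  fixes F :: "'a::comm_ring_1 fps"
  assumes F0: "F $ 0 = 0"
  shows "((1 + F) * fps_euler (fps_euler F) - fps_euler F ^ 2) $ n
       = of_nat (n^2) * F $ n + euler_quadratic n F"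
proof (cases n)
  case (Suc m)
  have split: "(\<Sum>i=0..n. g i) = g 0 + (\<Sum>i=1..m. g i) + g n" for g :: "nat \<Rightarrow> 'a"
    by (simp add: Suc sum.atLeast_Suc_atMost sum.cl_ivl_Suc)
  have "((1 + F) * fps_euler (fps_euler F)) $ n
      = of_nat (n^2) * F $ n + (\<Sum>i=1..m. of_nat ((n-i)^2) * (F $ i * F $ (n-i)))"
    unfolding fps_mult_nth split by (simp add: F0 power2_eq_square mult_ac)
  moreover have "(fps_euler F ^ 2) $ n = (\<Sum>i=1..m. of_nat (i*(n-i)) * (F $ i * F $ (n-i)))"
    unfolding power2_eq_square fps_mult_nth split by (simp add: F0 mult_ac)
  ultimately show ?thesis
    by (simp add: euler_quadratic_def Suc algebra_simps sum_subtractf)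
qed (simp add: fps_mult_nth power2_eq_square euler_quadratic_def)

definition euler_recursion :: "'a::comm_ring_1 \<Rightarrow> 'a fps \<Rightarrow> nat \<Rightarrow> bool" where
  "euler_recursion t F n \<longleftrightarrow>
     F $ n * (1 + of_nat (n^2) * t) = ((1 + F) ^ 3) $ (n - 1) - t * euler_quadratic n F"

lemma euler_equation_nth_0:
  fixes F :: "'a::comm_ring_1 fps"
  assumes "fps_X * (1 + F) ^ 3 - F
         = fps_const t * ((1 + F) * fps_euler (fps_euler F) - fps_euler F ^ 2)"
  shows "F $ 0 = 0"
  using arg_cong[OF assms, of "\<lambda>G. G $ 0"] by (simp add: fps_mult_nth power2_eq_square)

lemma euler_equation_imp_recursion:
  fixes F :: "'a::comm_ring_1 fps"
  assumes eq: "fps_X * (1 + F) ^ 3 - F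
         = fps_const t * ((1 + F) * fps_euler (fps_euler F) - fps_euler F ^ 2)"
    and n: "n \<ge> 1"
  shows "euler_recursion t F n"
proof -
  define Q where "Q = (1 + F) * fps_euler (fps_euler F) - fps_euler F ^ 2"
  have "((1 + F) ^ 3) $ (n - 1) - F $ n = t * Q $ n"
    using arg_cong[OF eq[folded Q_def], of "\<lambda>G. G $ n"] n by simp
  also have "Q $ n = of_nat (n^2) * F $ n + euler_quadratic n F"
    unfolding Q_def by (rule euler_quadratic_nth[OF euler_equation_nth_0[OF eq]])
  finally show ?thesis
    unfolding euler_recursion_def by (simp add: algebra_simps)
qed

lemma fps_power_nth_cong:
  assumes "\<And>j. j \<le> k \<Longrightarrow> f $ j = g $ j"
  shows "(f ^ p) $ k = (g ^ p) $ k"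
  using assms
proof (induction p arbitrary: k)
  case (Suc p)
  then show ?case
    by (simp add: fps_mult_nth)
qed simp

lemma euler_recursion_unique:
  fixes F G :: "'a::field fps"
  assumes F0: "F $ 0 = 0" and G0: "G $ 0 = 0"
    and F: "\<And>n. 1 \<le> n \<Longrightarrow> n \<le> N \<Longrightarrow> euler_recursion t F n"
    and G: "\<And>n. 1 \<le> n \<Longrightarrow> n \<le> N \<Longrightarrow> euler_recursion t G n"
    and nonzero: "\<And>n. 1 \<le> n \<Longrightarrow> n \<le> N \<Longrightarrow> 1 + of_nat (n^2) * t \<noteq> 0"
  shows "n \<le> N \<Longrightarrow> F $ n = G $ n"
proof (induction n rule: less_induct)
  case (less n)
  show ?case
  proof (cases n)
    case (Suc m)
    have below: "(1 + F) $ j = (1 + G) $ j" if "j \<le> m" for j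
      using less.IH[of j] less.prems that Suc by simp
    have "((1 + F) ^ 3) $ m = ((1 + G) ^ 3) $ m"
      by (rule fps_power_nth_cong) (rule below)
    moreover have "euler_quadratic n F = euler_quadratic n G"
      unfolding euler_quadratic_def using less.IH less.prems Suc
      by (intro sum.cong refl) auto
    ultimately have "F $ n * (1 + of_nat (n^2) * t) = G $ n * (1 + of_nat (n^2) * t)"
      using F[of n] G[of n] less.prems Suc by (simp add: euler_recursion_def)
    then show ?thesis
      using nonzero[of n] less.prems Suc by simp
  qed (simp add: F0 G0)
qed

section \<open>Convergence and evaluation of the coefficient series\<close>

lemma fps_conv_radius_sum_gt:
  fixes f :: "'b \<Rightarrow> 'a::{banach,real_normed_field} fps"
  assumes "\<And>i. i \<in> I \<Longrightarrow> ereal r < fps_conv_radius (f i)"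
  shows "ereal r < fps_conv_radius (\<Sum>i\<in>I. f i)"
  using assms
proof (induction I rule: infinite_finite_induct)
  case (insert i I)
  then have "ereal r < min (fps_conv_radius (f i)) (fps_conv_radius (\<Sum>i\<in>I. f i))"
    by simp
  also have "\<dots> \<le> fps_conv_radius (f i + (\<Sum>i\<in>I. f i))"
    by (rule fps_conv_radius_add)
  finally show ?case
    using insert.hyps by simp
qed auto

lemma eval_fps_sum:
  fixes f :: "'b \<Rightarrow> 'a::{banach,real_normed_field} fps"
  assumes "\<And>i. i \<in> I \<Longrightarrow> ereal (norm z) < fps_conv_radius (f i)"
  shows "eval_fps (\<Sum>i\<in>I. f i) z = (\<Sum>i\<in>I. eval_fps (f i) z)"
  using assms
proof (induction I rule: infinite_finite_induct)
  case (insert i I)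
  then show ?case
    by (simp add: eval_fps_add fps_conv_radius_sum_gt)
qed auto

lemma fps_conv_radius_mult_gt:
  fixes f g :: "'a::{banach,real_normed_field} fps"
  assumes "ereal r < fps_conv_radius f" "ereal r < fps_conv_radius g"
  shows "ereal r < fps_conv_radius (f * g)"
  using assms fps_conv_radius_mult[of f g] by (meson less_le_trans min_less_iff_conj)

lemma fps_conv_radius_diff_gt:
  fixes f g :: "'a::{banach,real_normed_field} fps"
  assumes "ereal r < fps_conv_radius f" "ereal r < fps_conv_radius g"
  shows "ereal r < fps_conv_radius (f - g)"
  using assms fps_conv_radius_diff[of f g] by (meson less_le_trans min_less_iff_conj)

lemma fps_conv_radius_geometric:
  fixes c :: "'a::{banach,real_normed_field}"
  assumes "c \<noteq> 0"
  shows "fps_conv_radius (Abs_fps (\<lambda>k. c ^ k)) = ereal (1 / norm c)"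
proof -
  have "(\<lambda>k. norm (c ^ k) / norm (c ^ Suc k)) = (\<lambda>k. 1 / norm c)"
    using assms by (simp add: norm_mult norm_power)
  then show ?thesis
    unfolding fps_conv_radius_def using assms
    by (intro conv_radius_ratio_limit[of _ "1 / norm c"]) simp_all
qed

lemma fps_one_plus_cmult_X_inverse:
  "(1 + fps_const c * fps_X) * Abs_fps (\<lambda>k. (- c) ^ k) = (1 :: 'a::comm_ring_1 fps)"
proof (rule fps_ext)
  fix k
  show "((1 + fps_const c * fps_X) * Abs_fps (\<lambda>k. (- c) ^ k)) $ k = (1 :: 'a fps) $ k"
    by (cases k) (simp_all add: distrib_right mult.assoc)
qed

lemma
  fixes c w :: "'a::{banach,real_normed_field}"
  shows fps_conv_radius_one_plus_cmult_X: "fps_conv_radius (1 + fps_const c * fps_X) = \<infinity>"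
    and eval_fps_one_plus_cmult_X: "eval_fps (1 + fps_const c * fps_X) w = 1 + c * w"
proof -
  have "fps_conv_radius (fps_const c * fps_X) = \<infinity>"
    using fps_conv_radius_mult[of "fps_const c" fps_X] by simp
  then show "fps_conv_radius (1 + fps_const c * fps_X) = \<infinity>"
    using fps_conv_radius_add[of 1 "fps_const c * fps_X"] by simp
  show "eval_fps (1 + fps_const c * fps_X) w = 1 + c * w"
    using \<open>fps_conv_radius (fps_const c * fps_X) = \<infinity>\<close>
    by (simp add: eval_fps_add eval_fps_mult)
qed

definition eval_fps_coeffs :: "'a::{banach,real_normed_field} fps fps \<Rightarrow> 'a \<Rightarrow> 'a fps" where
  "eval_fps_coeffs Q w = Abs_fps (\<lambda>j. eval_fps (Q $ j) w)"

lemma eval_fps_coeffs_nth [simp]: "eval_fps_coeffs Q w $ j = eval_fps (Q $ j) w"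
  by (simp add: eval_fps_coeffs_def)

lemma eval_fps_power_nth:
  fixes Q :: "'a::{banach,real_normed_field} fps fps"
  assumes "\<And>j. j \<le> k \<Longrightarrow> ereal (norm w) < fps_conv_radius (Q $ j)"
  shows "ereal (norm w) < fps_conv_radius ((Q ^ p) $ k)
       \<and> eval_fps ((Q ^ p) $ k) w = (eval_fps_coeffs Q w ^ p) $ k"
  using assms
proof (induction p arbitrary: k)
  case 0
  then show ?case
    by (simp add: fps_one_nth)
next
  case (Suc p)
  have conv: "ereal (norm w) < fps_conv_radius (Q $ i * (Q ^ p) $ (k - i))" if "i \<le> k" for i
    using that Suc.prems Suc.IH[of "k - i"] by (intro fps_conv_radius_mult_gt) auto
  have nth: "(Q ^ Suc p) $ k = (\<Sum>i=0..k. Q $ i * (Q ^ p) $ (k - i))"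
    by (simp add: fps_mult_nth)
  have "eval_fps ((Q ^ Suc p) $ k) w = (\<Sum>i=0..k. eval_fps (Q $ i * (Q ^ p) $ (k - i)) w)"
    unfolding nth by (rule eval_fps_sum) (simp add: conv)
  also have "\<dots> = (\<Sum>i=0..k. eval_fps (Q $ i) w * (eval_fps_coeffs Q w ^ p) $ (k - i))"
    using Suc.prems Suc.IH by (intro sum.cong refl) (simp add: eval_fps_mult)
  finally show ?case
    unfolding nth using conv by (auto simp: fps_mult_nth intro: fps_conv_radius_sum_gt)
qed

lemma eval_fps_euler_quadratic:
  fixes P :: "'a::{banach,real_normed_field} fps fps"
  assumes conv: "\<And>j. j < n \<Longrightarrow> ereal (norm w) < fps_conv_radius (P $ j)"
  shows "ereal (norm w) < fps_conv_radius (euler_quadratic n P)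
       \<and> eval_fps (euler_quadratic n P) w = euler_quadratic n (eval_fps_coeffs P w)"
proof -
  have const: "(of_nat k - of_nat l :: 'a fps) = fps_const (of_nat k - of_nat l)" for k l
    by (simp flip: fps_of_nat)
  have term_conv: "ereal (norm w) < fps_conv_radius (P $ i * P $ (n - i))" if "i \<in> {1..n-1}" for i
    using that conv by (intro fps_conv_radius_mult_gt) auto
  have "ereal (norm w) < fps_conv_radius (euler_quadratic n P)"
    unfolding euler_quadratic_def const
    by (intro fps_conv_radius_sum_gt, rule fps_conv_radius_mult_gt) (simp_all add: term_conv)
  moreover have "eval_fps (euler_quadratic n P) w = euler_quadratic n (eval_fps_coeffs P w)"
    unfolding euler_quadratic_def const
    by (subst eval_fps_sum)
      (use term_conv conv in \<open>auto simp: eval_fps_mult fps_conv_radius_mult_gt intro!: sum.cong\<close>)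
  ultimately show ?thesis ..
qed

lemma eval_fps_euler_recursion_rhs:
  fixes P :: "'a::{banach,real_normed_field} fps fps"
  assumes P0: "P $ 0 = 0" and conv: "\<And>j. j < n \<Longrightarrow> ereal (norm w) < fps_conv_radius (P $ j)"
  defines "E \<equiv> eval_fps_coeffs P w"
  shows "ereal (norm w) < fps_conv_radius (((1 + P) ^ 3) $ (n - 1) - fps_X * euler_quadratic n P)
       \<and> eval_fps (((1 + P) ^ 3) $ (n - 1) - fps_X * euler_quadratic n P) w
         = ((1 + E) ^ 3) $ (n - 1) - w * euler_quadratic n E"
proof -
  have "ereal (norm w) < fps_conv_radius ((1 + P) $ j)" if "j \<le> n - 1" for j
    using that conv[of j] by (cases "j = 0") (auto simp: P0)
  then have cube: "ereal (norm w) < fps_conv_radius (((1 + P) ^ 3) $ (n - 1))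
      \<and> eval_fps (((1 + P) ^ 3) $ (n - 1)) w = (eval_fps_coeffs (1 + P) w ^ 3) $ (n - 1)"
    by (rule eval_fps_power_nth)
  have "eval_fps_coeffs (1 + P) w = 1 + E"
    by (rule fps_ext) (simp add: E_def P0 fps_one_nth)
  moreover have quad: "ereal (norm w) < fps_conv_radius (fps_X * euler_quadratic n P)"
    using eval_fps_euler_quadratic[OF conv] by (intro fps_conv_radius_mult_gt) auto
  ultimately show ?thesis
    using cube eval_fps_euler_quadratic[OF conv]
    by (auto simp: E_def eval_fps_diff eval_fps_mult intro: fps_conv_radius_diff_gt)
qed

lemma euler_recursion_eval:
  fixes P :: "'a::{banach,real_normed_field} fps fps"
  assumes rec: "euler_recursion fps_X P n" and P0: "P $ 0 = 0"
    and conv: "\<And>j. j \<le> n \<Longrightarrow> ereal (norm w) < fps_conv_radius (P $ j)"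
  shows "euler_recursion w (eval_fps_coeffs P w) n"
proof -
  have "P $ n * (1 + fps_const (of_nat (n^2)) * fps_X)
      = ((1 + P) ^ 3) $ (n - 1) - fps_X * euler_quadratic n P"
    using rec unfolding euler_recursion_def fps_of_nat .
  then have "eval_fps (P $ n * (1 + fps_const (of_nat (n^2)) * fps_X)) w
      = eval_fps (((1 + P) ^ 3) $ (n - 1) - fps_X * euler_quadratic n P) w"
    by (rule arg_cong)
  then show ?thesis
    using eval_fps_euler_recursion_rhs[OF P0, of n w] conv
    by (simp add: euler_recursion_def eval_fps_mult fps_conv_radius_one_plus_cmult_X
        eval_fps_one_plus_cmult_X)
qed

lemma euler_recursion_conv_radius:
  fixes P :: "'a::{banach,real_normed_field} fps fps" and w :: 'a
  assumes P0: "P $ 0 = 0" and rec: "\<And>n. n \<ge> 1 \<Longrightarrow> euler_recursion fps_X P n"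
  shows "norm w < 1 / (real n)^2 \<Longrightarrow> ereal (norm w) < fps_conv_radius (P $ n)"
proof (induction n rule: less_induct)
  case (less n)
  show ?case
  proof (cases "n = 0")
    case False
    define c where "c = (of_nat (n^2) :: 'a)"
    define H where "H = ((1 + P) ^ 3) $ (n - 1) - fps_X * euler_quadratic n P"
    have "ereal (norm w) < fps_conv_radius (P $ j)" if "j < n" for j
    proof (cases "j = 0")
      case False
      then have "1 / (real n)^2 \<le> 1 / (real j)^2"
        using that by (intro divide_left_mono power_mono) auto
      then show ?thesis
        using less that by auto
    qed (simp add: P0)
    then have conv_H: "ereal (norm w) < fps_conv_radius H"
      unfolding H_def using eval_fps_euler_recursion_rhs[OF P0] by blast
    have "ereal (norm w) < ereal (1 / norm (- c))"
      using less.prems unfolding c_def norm_minus_cancel norm_of_nat by simp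
    also have "\<dots> = fps_conv_radius (Abs_fps (\<lambda>k. (- c) ^ k))"
      using False by (simp add: c_def fps_conv_radius_geometric)
    finally have conv_geometric: "ereal (norm w) < fps_conv_radius (Abs_fps (\<lambda>k. (- c) ^ k))" .
    have "P $ n * (1 + fps_const c * fps_X) = H"
      using rec[of n] False unfolding euler_recursion_def c_def H_def fps_of_nat by simp
    then have "P $ n = H * Abs_fps (\<lambda>k. (- c) ^ k)"
      using fps_one_plus_cmult_X_inverse[of c] by (metis mult.assoc mult.right_neutral)
    then show ?thesis
      using conv_H conv_geometric by (simp add: fps_conv_radius_mult_gt)
  qed (simp add: P0)
qed

section \<open>The recursion for u\<close>

lemma fps_square_nth_pairs:
  fixes F :: "'a::comm_ring_1 fps"
  assumes F0: "F $ 0 = 0"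
  shows "(F ^ 2) $ m = (\<Sum>(j1, j2) \<in> {(j1, j2). 1 \<le> j1 \<and> 1 \<le> j2 \<and> j1 + j2 = m}. F $ j1 * F $ j2)"
proof -
  have "(F ^ 2) $ m = (\<Sum>i\<in>{1..<m}. F $ i * F $ (m - i))"
    unfolding power2_eq_square fps_mult_nth
    by (rule sum.mono_neutral_cong_right) (auto simp: F0 Suc_le_eq)
  also have "\<dots> = (\<Sum>(j1, j2) \<in> {(j1, j2). 1 \<le> j1 \<and> 1 \<le> j2 \<and> j1 + j2 = m}. F $ j1 * F $ j2)"
    by (rule sum.reindex_bij_witness[of _ fst "\<lambda>i. (i, m - i)"]) auto
  finally show ?thesis .
qed

lemma fps_cube_nth_triples:
  fixes F :: "'a::comm_ring_1 fps"
  assumes F0: "F $ 0 = 0"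
  shows "(F ^ 3) $ m = (\<Sum>(j1, j2, j3) \<in> {(j1, j2, j3). 1 \<le> j1 \<and> 1 \<le> j2 \<and> 1 \<le> j3 \<and> j1 + j2 + j3 = m}.
           F $ j1 * F $ j2 * F $ j3)"
proof -
  have "(F ^ 3) $ m = (\<Sum>(i, j)\<in>Sigma {..m} (\<lambda>i. {..m - i}). F $ i * F $ j * F $ (m - i - j))"
    unfolding fps_cube_nth by (simp add: sum.Sigma)
  also have "\<dots> = (\<Sum>(i, j)\<in>{(i, j). 1 \<le> i \<and> 1 \<le> j \<and> i + j < m}. F $ i * F $ j * F $ (m - i - j))"
  proof (rule sum.mono_neutral_cong_right)
    show "\<forall>p\<in>Sigma {..m} (\<lambda>i. {..m - i}) - {(i, j). 1 \<le> i \<and> 1 \<le> j \<and> i + j < m}.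
        (case p of (i, j) \<Rightarrow> F $ i * F $ j * F $ (m - i - j)) = 0"
    proof
      fix p assume p: "p \<in> Sigma {..m} (\<lambda>i. {..m - i}) - {(i, j). 1 \<le> i \<and> 1 \<le> j \<and> i + j < m}"
      obtain i j where ij: "p = (i, j)"
        by (cases p)
      then have "i = 0 \<or> j = 0 \<or> m - i - j = 0"
        using p by auto
      then show "(case p of (i, j) \<Rightarrow> F $ i * F $ j * F $ (m - i - j)) = 0"
        using ij F0 by auto
    qed
  qed auto
  also have "\<dots> = (\<Sum>(j1, j2, j3) \<in> {(j1, j2, j3). 1 \<le> j1 \<and> 1 \<le> j2 \<and> 1 \<le> j3 \<and> j1 + j2 + j3 = m}.
           F $ j1 * F $ j2 * F $ j3)"
    by (rule sum.reindex_bij_witness[of _ "\<lambda>(i, j, k). (i, j)" "\<lambda>(i, j). (i, j, m - i - j)"]) auto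
  finally show ?thesis .
qed

lemma euler_quadratic_symmetric:
  fixes F :: "'a::comm_ring_1 fps"
  shows "euler_quadratic n F
       = (\<Sum>j \<in> {j. 1 \<le> j \<and> 2 * j < n}. (of_nat (n - 2 * j))^2 * F $ j * F $ (n - j))"
proof -
  define f where "f i = (of_nat ((n-i)^2) - of_nat (i*(n-i))) * (F $ i * F $ (n-i))" for i
  define L where "L = {j. 1 \<le> j \<and> 2 * j < n}"
  define U where "U = {j. n < 2 * j \<and> j \<le> n - 1}"
  have "euler_quadratic n F = (\<Sum>i\<in>{1..n-1} - L. f i) + (\<Sum>i\<in>L. f i)"
    unfolding euler_quadratic_def f_def[symmetric]
    by (rule sum.subset_diff) (auto simp: L_def)
  also have "(\<Sum>i\<in>{1..n-1} - L. f i) = (\<Sum>i\<in>U. f i)"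
  proof (rule sum.mono_neutral_cong_right)
    show "\<forall>i\<in>{1..n-1} - L - U. f i = 0"
    proof
      fix i assume "i \<in> {1..n-1} - L - U"
      then have "n - i = i"
        by (auto simp: L_def U_def)
      then show "f i = 0"
        by (simp add: f_def power2_eq_square)
    qed
  qed (auto simp: L_def U_def)
  also have "(\<Sum>i\<in>U. f i) = (\<Sum>j\<in>L. f (n - j))"
    by (rule sum.reindex_bij_witness[of _ "\<lambda>j. n - j" "\<lambda>j. n - j"]) (auto simp: U_def L_def)
  also have "(\<Sum>j\<in>L. f (n - j)) + (\<Sum>j\<in>L. f j) = (\<Sum>j\<in>L. (of_nat (n - 2 * j))^2 * F $ j * F $ (n - j))"
    unfolding sum.distrib[symmetric]
  proof (rule sum.cong[OF refl])
    fix j assume "j \<in> L"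
    then have j: "2 * j < n"
      by (simp add: L_def)
    then have "f (n - j) + f j
        = ((of_nat (n - j))^2 - of_nat (n - j) * of_nat j + (of_nat j)^2 - of_nat j * of_nat (n - j))
          * (F $ j * F $ (n - j))"
      by (simp add: f_def of_nat_mult algebra_simps)
    also have "\<dots> = (of_nat (n - 2 * j))^2 * F $ j * F $ (n - j)"
      using j by (simp add: of_nat_diff power2_eq_square algebra_simps)
    finally show "f (n - j) + f j = (of_nat (n - 2 * j))^2 * F $ j * F $ (n - j)" .
  qed
  finally show ?thesis
    by (simp add: L_def)
qed

lemma u_recursion:
  fixes a :: complex
  assumes n: "n \<ge> 1" and a: "a^2 + of_nat (n^2) \<noteq> 0"
  defines "U \<equiv> Abs_fps (\<lambda>j. u j a)"
  shows "u n a * (a^2 + of_nat (n^2)) = ((1 + U) ^ 3) $ (n - 1) - euler_quadratic n U"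
proof -
  have U0: "U $ 0 = 0"
    by (simp add: U_def)
  show ?thesis
  proof (cases "n = 1")
    case True
    then show ?thesis
      using a by (simp add: U0 euler_quadratic_def fps_nth_power_0)
  next
    case False
    then obtain m where m: "n = Suc (Suc m)"
      using n by (cases n rule: nat.exhaust; cases "n - 1" rule: nat.exhaust) auto
    have cube: "(1 + U) ^ 3 = 1 + 3 * U + 3 * U ^ 2 + U ^ 3"
      by (simp add: power3_eq_cube power2_eq_square algebra_simps)
    have "u n a * (a^2 + of_nat (n^2))
        = 3 * u (n - 1) a
          + 3 * (\<Sum>(j1, j2) \<in> {(j1, j2). 1 \<le> j1 \<and> 1 \<le> j2 \<and> j1 + j2 = n - 1}. u j1 a * u j2 a)
          + (\<Sum>(j1, j2, j3) \<in> {(j1, j2, j3). 1 \<le> j1 \<and> 1 \<le> j2 \<and> 1 \<le> j3 \<and> j1 + j2 + j3 = n - 1}.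
               u j1 a * u j2 a * u j3 a)
          - (\<Sum>j1 \<in> {j1. 1 \<le> j1 \<and> 2 * j1 < n}. (of_nat (n - 2 * j1))^2 * u j1 a * u (n - j1) a)"
      using a unfolding m by (simp only: u.simps Let_def) simp
    also have "\<dots> = 3 * U $ (n - 1) + 3 * (U ^ 2) $ (n - 1) + (U ^ 3) $ (n - 1) - euler_quadratic n U"
      by (simp only: fps_square_nth_pairs[OF U0] fps_cube_nth_triples[OF U0] euler_quadratic_symmetric)
        (simp add: U_def)
    also have "\<dots> = ((1 + U) ^ 3) $ (n - 1) - euler_quadratic n U"
      unfolding cube by (simp add: m fps_numeral_nth)
    finally show ?thesis .
  qed
qed

lemma fps_power_nth_scaled:
  fixes F :: "'a::comm_ring_1 fps"
  shows "(Abs_fps (\<lambda>j. c ^ j * F $ j) ^ p) $ k = c ^ k * (F ^ p) $ k"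
proof (induction p arbitrary: k)
  case 0
  then show ?case
    by (simp add: fps_one_nth)
next
  case (Suc p)
  have "(Abs_fps (\<lambda>j. c ^ j * F $ j) ^ Suc p) $ k
      = (\<Sum>i=0..k. c ^ i * F $ i * (c ^ (k - i) * (F ^ p) $ (k - i)))"
    by (simp add: fps_mult_nth Suc.IH)
  also have "\<dots> = (\<Sum>i=0..k. c ^ k * (F $ i * (F ^ p) $ (k - i)))"
  proof (intro sum.cong refl)
    fix i assume "i \<in> {0..k}"
    then have "c ^ k = c ^ i * c ^ (k - i)"
      by (simp flip: power_add)
    then show "c ^ i * F $ i * (c ^ (k - i) * (F ^ p) $ (k - i)) = c ^ k * (F $ i * (F ^ p) $ (k - i))"
      by (simp add: mult_ac)
  qed
  also have "\<dots> = c ^ k * (F ^ Suc p) $ k"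
    by (simp add: fps_mult_nth sum_distrib_left)
  finally show ?case .
qed

lemma euler_quadratic_scaled:
  fixes F :: "'a::comm_ring_1 fps"
  shows "euler_quadratic n (Abs_fps (\<lambda>j. c ^ j * F $ j)) = c ^ n * euler_quadratic n F"
proof -
  have scaled: "k * (c ^ i * F $ i * (c ^ (n - i) * F $ (n - i))) = c ^ n * (k * (F $ i * F $ (n - i)))"
    if "i \<in> {1..n-1}" for i k
  proof -
    from that have "i + (n - i) = n"
      by auto
    then have "c ^ n = c ^ i * c ^ (n - i)"
      using power_add[of c i "n - i"] by simp
    then show ?thesis
      by (simp add: mult_ac)
  qed
  show ?thesis
    unfolding euler_quadratic_def sum_distrib_left
    by (intro sum.cong refl) (simp only: fps_nth_Abs_fps scaled)
qed

lemma u_scaled_euler_recursion: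
  fixes a :: complex
  assumes a0: "a \<noteq> 0" and n: "n \<ge> 1" and a: "a^2 + of_nat (n^2) \<noteq> 0"
  shows "euler_recursion (1 / a^2) (Abs_fps (\<lambda>j. (a^2)^j * u j a)) n"
proof -
  define U where "U = Abs_fps (\<lambda>j. u j a)"
  define C where "C = ((1 + U) ^ 3) $ (n - 1)"
  define S where "S = euler_quadratic n U"
  have V: "Abs_fps (\<lambda>j. (a^2)^j * u j a) = Abs_fps (\<lambda>j. (a^2)^j * U $ j)"
    by (simp add: U_def)
  have one_plus_V: "1 + Abs_fps (\<lambda>j. (a^2)^j * U $ j) = Abs_fps (\<lambda>j. (a^2)^j * (1 + U) $ j)"
    by (rule fps_ext) (simp add: fps_one_nth)
  have pow: "(a^2)^n = a^2 * (a^2)^(n - 1)"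
    using n by (simp flip: power_Suc)
  have "(a^2)^n * u n a * (1 + of_nat (n^2) * (1 / a^2)) = (a^2)^(n - 1) * (u n a * (a^2 + of_nat (n^2)))"
    using a0 unfolding pow by (simp add: field_simps)
  also have "\<dots> = (a^2)^(n - 1) * C - 1 / a^2 * ((a^2)^n * S)"
    using a0 unfolding u_recursion[OF n a] U_def[symmetric] C_def S_def pow
    by (simp add: field_simps)
  finally show ?thesis
    unfolding euler_recursion_def V one_plus_V fps_power_nth_scaled euler_quadratic_scaled
    by (simp add: C_def S_def U_def)
qed

section \<open>The expansion in powers of a^-2\<close>

lemma expansion_coeffs_eval:
  fixes A :: "nat \<Rightarrow> complex \<Rightarrow> complex" and a :: complex
  assumes holo: "\<And>k. A k holomorphic_on ball 0 (4/27)"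
    and formal: "\<And>z. z \<in> ball 0 (4/27) \<Longrightarrow> formal_solution A z"
    and n: "n \<ge> 1" and a: "norm a > real n"
  defines "P \<equiv> fps_transpose (Abs_fps (\<lambda>k. fps_expansion (A k) 0))"
  shows "ereal (norm (1 / a^2)) < fps_conv_radius (P $ n)
       \<and> eval_fps (P $ n) (1 / a^2) = (a^2)^n * u n a"
proof -
  define w where "w = 1 / a^2"
  have eq: "fps_X * (1 + P) ^ 3 - P
      = fps_const fps_X * ((1 + P) * fps_euler (fps_euler P) - fps_euler P ^ 2)"
    unfolding P_def using holo formal by (rule expansion_coeffs_euler_equation)
  have P0: "P $ 0 = 0"
    using eq by (rule euler_equation_nth_0)
  have rec: "euler_recursion fps_X P j" if "j \<ge> 1" for j
    using eq that by (rule euler_equation_imp_recursion)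
  have a0: "a \<noteq> 0"
    using a n by auto
  have small: "norm w * (real j)^2 < 1" if "j \<le> n" for j
  proof -
    have "(real j)^2 < (norm a)^2"
      using that a by (intro power_strict_mono) auto
    then show ?thesis
      using a0 by (simp add: w_def norm_divide norm_power field_simps)
  qed
  have conv: "ereal (norm w) < fps_conv_radius (P $ j)" if "j \<le> n" for j
  proof (cases "j = 0")
    case False
    then have "norm w < 1 / (real j)^2"
      using small[OF that] by (simp add: field_simps)
    with P0 rec show ?thesis
      by (rule euler_recursion_conv_radius)
  qed (simp add: P0)
  have "eval_fps_coeffs P w $ n = Abs_fps (\<lambda>j. (a^2)^j * u j a) $ n"
  proof (rule euler_recursion_unique[of _ _ n w])
    fix j assume j: "1 \<le> j" "j \<le> n"
    show "euler_recursion w (eval_fps_coeffs P w) j"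
      using rec[OF j(1)] P0 conv j by (intro euler_recursion_eval) auto
    have "norm (of_nat (j^2) * w) < 1"
      using small[OF j(2)] unfolding norm_mult norm_of_nat by (simp add: mult.commute)
    then show "1 + of_nat (j^2) * w \<noteq> 0"
      by (metis add.inverse_unique norm_minus_cancel norm_one less_irrefl)
    then have "a^2 + of_nat (j^2) \<noteq> 0"
      using a0 by (auto simp: w_def field_simps)
    with a0 j(1) show "euler_recursion w (Abs_fps (\<lambda>j. (a^2)^j * u j a)) j"
      unfolding w_def by (rule u_scaled_euler_recursion)
  qed (simp_all add: P0)
  then show ?thesis
    using conv[of n] by (simp add: w_def)
qed

theorem corollary1:
  fixes A :: "nat \<Rightarrow> complex \<Rightarrow> complex" and n :: nat and a :: complex
  assumes holo: "\<And>k. A k holomorphic_on ball 0 (4/27)"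
    and A0_zero: "A 0 0 = 0"
    and formal: "\<And>z. z \<in> ball 0 (4/27) \<Longrightarrow> formal_solution A z"
    and n: "n \<ge> 1"
    and a: "norm a > real n"
  shows "summable (\<lambda>k. norm ((-1)^k * Acoef A k n / a^(2*k)))
       \<and> (\<Sum>k. (-1)^k * Acoef A k n / a^(2*k)) = u n a * a^(2*n)"
proof -
  define P where "P = fps_transpose (Abs_fps (\<lambda>k. fps_expansion (A k) 0))"
  define w where "w = 1 / a^2"
  have conv: "ereal (norm w) < fps_conv_radius (P $ n)"
    and val: "eval_fps (P $ n) w = (a^2)^n * u n a"
    using expansion_coeffs_eval[OF holo formal n a] unfolding P_def w_def by auto
  have "(-1)^k * Acoef A k n / a^(2*k) = P $ n $ k * w ^ k" for k
    by (simp add: P_def w_def Acoef_def fps_expansion_def power_mult power_one_over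
        flip: power_mult_distrib)
  moreover have "a^(2*n) = (a^2)^n"
    by (rule power_mult)
  ultimately show ?thesis
    using norm_summable_fps[OF conv] sums_eval_fps[OF conv] val
    by (simp add: sums_iff mult.commute)
qed

end
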